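(* There exist $b_1,b_2\in L^\infty_{loc}(\mathbb{R})$ such that $S_2(b_1,b_2)+T_2(b_1,b_2)<\infty$, but $S_{A,B}(b_1,b_2)=\infty$ and $T_C(b_1,b_2)=\infty$ for all Young functions $A,B,C$ with $\bar A,\bar B,\bar C\in B_2$. Moreover, the commutator $C_bH=[b_2,[b_1,H]]$ is not bounded on $L^2(\mathbb{R})$.
   Context: $H$ is the Hilbert transform $Hf(x)=\lim_{\varepsilon\to0}\int_{|x-y|>\varepsilon}\frac{f(y)}{x-y}dy$; $[A,B]=AB-BA$ with $b_i$ acting by multiplication. A Young function is a continuous, convex, strictly increasing $A:[0,\infty)\to[0,\infty)$ with $A(0)=0$ and $A(t)/t\to\infty$; $\bar A(t)=\sup_{s>0}\{st-A(s)\}$; $A\in B_2$ means $\int_1^\infty\frac{A(t)}{t^2}\frac{dt}{t}<\infty$; $\langle|f|\rangle_{A,I}=\inf\{\lambda>0:\frac1{|I|}\int_IA(|f|/\lambda)\le1\}$. With $\langle g\rangle_I=\frac1{|I|}\int_Ig$ and suprema over all intervals $I\subset\mathbb{R}$: $S_2(b_1,b_2)=\sup_I\big(\frac1{|I|}\int_I|b_1-\langle b_1\rangle_I|^2\big)^{1/2}\big(\frac1{|I|}\int_I|b_2-\langle b_2\rangle_I|^2\big)^{1/2}$, $T_2(b_1,b_2)=\sup_I\big(\frac1{|I|}\int_I|b_1-\langle b_1\rangle_I|^2|b_2-\langle b_2\rangle_I|^2\big)^{1/2}$, $S_{A,B}(b_1,b_2)=\sup_I\langle|b_1-\langle b_1\rangle_I|\rangle_{A,I}\langle|b_2-\langle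 b_2\rangle_I|\rangle_{B,I}$, $T_C(b_1,b_2)=\sup_I\langle|b_1-\langle b_1\rangle_I||b_2-\langle b_2\rangle_I|\rangle_{C,I}$. *)

theory Defs
  imports "HOL-Analysis.Analysis"
begin

definition young :: "(real \<Rightarrow> real) \<Rightarrow> bool" where
  "young A \<longleftrightarrow> continuous_on {0..} A \<and> convex_on {0..} A \<and> strict_mono_on {0..} A
      \<and> A 0 = 0 \<and> filterlim (\<lambda>t. A t / t) at_top at_top"

definition conj_young :: "(real \<Rightarrow> real) \<Rightarrow> real \<Rightarrow> real" where
  "conj_young A t = Sup {s * t - A s | s. s > 0}"

definition B2 :: "(real \<Rightarrow> real) \<Rightarrow> bool" where
  "B2 A \<longleftrightarrow> (\<integral>\<^sup>+ t \<in> {1..}. ennreal (A t / t ^ 2 / t) \<partial>lborel) < \<infinity>"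

definition avg :: "real \<Rightarrow> real \<Rightarrow> (real \<Rightarrow> real) \<Rightarrow> real" where
  "avg a b g = (LINT y:{a..b}|lborel. g y) / (b - a)"

definition osc :: "real \<Rightarrow> real \<Rightarrow> (real \<Rightarrow> real) \<Rightarrow> real \<Rightarrow> real" where
  "osc a b g x = \<bar>g x - avg a b g\<bar>"

text \<open>Luxemburg average of |f| over [a,b]; infimum of empty set is infinity.\<close>
definition lux :: "(real \<Rightarrow> real) \<Rightarrow> real \<Rightarrow> real \<Rightarrow> (real \<Rightarrow> real) \<Rightarrow> ereal" where
  "lux A a b f = Inf {ereal l | l. l > 0 \<and> avg a b (\<lambda>x. A (\<bar>f x\<bar> / l)) \<le> 1}"

definition S2 :: "(real \<Rightarrow> real) \<Rightarrow> (real \<Rightarrow> real) \<Rightarrow> ereal" where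
  "S2 b1 b2 = (SUP (a, b) \<in> {(a, b). a < b}.
     ereal (sqrt (avg a b (\<lambda>x. (osc a b b1 x)\<^sup>2)) * sqrt (avg a b (\<lambda>x. (osc a b b2 x)\<^sup>2))))"

definition T2 :: "(real \<Rightarrow> real) \<Rightarrow> (real \<Rightarrow> real) \<Rightarrow> ereal" where
  "T2 b1 b2 = (SUP (a, b) \<in> {(a, b). a < b}.
     ereal (sqrt (avg a b (\<lambda>x. (osc a b b1 x)\<^sup>2 * (osc a b b2 x)\<^sup>2))))"

definition SAB :: "(real \<Rightarrow> real) \<Rightarrow> (real \<Rightarrow> real) \<Rightarrow> (real \<Rightarrow> real) \<Rightarrow> (real \<Rightarrow> real) \<Rightarrow> ereal" where
  "SAB A B b1 b2 = (SUP (a, b) \<in> {(a, b). a < b}. lux A a b (osc a b b1) * lux B a b (osc a b b2))"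

definition TC :: "(real \<Rightarrow> real) \<Rightarrow> (real \<Rightarrow> real) \<Rightarrow> (real \<Rightarrow> real) \<Rightarrow> ereal" where
  "TC C b1 b2 = (SUP (a, b) \<in> {(a, b). a < b}. lux C a b (\<lambda>x. osc a b b1 x * osc a b b2 x))"

definition Linf_loc :: "(real \<Rightarrow> real) \<Rightarrow> bool" where
  "Linf_loc b \<longleftrightarrow> b \<in> borel_measurable lborel \<and>
     (\<forall>a c. \<exists>M. AE x in lborel. x \<in> {a..c} \<longrightarrow> \<bar>b x\<bar> \<le> M)"

text \<open>Hilbert transform as principal value (no 1/pi normalisation, as in the paper).\<close>
definition hilbert :: "(real \<Rightarrow> real) \<Rightarrow> real \<Rightarrow> real" where
  "hilbert f x = Lim (at_right 0) (\<lambda>\<epsilon>. LINT y:{y. \<epsilon> < \<bar>x - y\<bar>}|lborel. f y / (x - y))"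

definition comm :: "(real \<Rightarrow> real) \<Rightarrow> ((real \<Rightarrow> real) \<Rightarrow> real \<Rightarrow> real) \<Rightarrow> (real \<Rightarrow> real) \<Rightarrow> real \<Rightarrow> real" where
  "comm b T f x = b x * T f x - T (\<lambda>y. b y * f y) x"

end

theory Submission
  imports Defs
begin

text \<open>
  Take b1 x = sqrt (max x 0) and b2 the indicator of [0,1]. On an interval of length r the
  function b1 oscillates by at most sqrt r, while the mean square oscillation of b2 is at most
  min 1 r / r; hence S2 and T2 are both at most 1.

  The B2 condition on the complementary function of A forces A s \<ge> K s^2 for large s, for
  every K: if A s < K s^2, then the complementary function is at least t^2/(4K) on the block
  (t,2t] with t = 2Ks, so each such block contributes at least 1/(32K) to the B2 integral.
  On [0,r], b1 - <b1> is at least sqrt r / 4 on [0,r/64] and b2 - <b2> is at least 1/2 on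
  [0,1]. Superquadratic growth then gives Luxemburg averages of order sqrt r for b1, at least
  sqrt (K/r) / 2 for b2 and at least sqrt K / 8 for the product, for every K once r is large;
  so S_{A,B} and T_C are infinite.

  For x > 1 the double commutator applied to b2 is the integral of (b1 y - b1 x)/(x - y)
  over [0,1], which is at most -1/(2 sqrt x). Its square is not integrable at infinity,
  whereas b2 has L^2 norm 1.
\<close>

subsection \<open>Young functions and the B2 condition\<close>

lemma young_nonneg: "young A \<Longrightarrow> 0 \<le> t \<Longrightarrow> 0 \<le> A t"
  unfolding young_def strict_mono_on_def
  by (metis atLeast_iff less_eq_real_def order_refl)

lemma young_mono: "young A \<Longrightarrow> 0 \<le> s \<Longrightarrow> s \<le> t \<Longrightarrow> A s \<le> A t"
  unfolding young_def strict_mono_on_def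
  by (metis atLeast_iff less_eq_real_def order_trans)

lemma bdd_above_conj_young:
  assumes y: "young A"
  shows "bdd_above {s * t - A s | s. s > 0}"
proof -
  have "filterlim (\<lambda>t. A t / t) at_top at_top" using y unfolding young_def by blast
  then have "eventually (\<lambda>s. \<bar>t\<bar> \<le> A s / s) at_top"
    by (simp add: filterlim_at_top)
  then obtain S where S: "\<And>s. s \<ge> S \<Longrightarrow> \<bar>t\<bar> \<le> A s / s"
    by (auto simp: eventually_at_top_linorder)
  show ?thesis
  proof (rule bdd_aboveI[where M="\<bar>S\<bar> * \<bar>t\<bar>"], clarify)
    fix s :: real assume s: "s > 0"
    have st: "s * t \<le> s * \<bar>t\<bar>" using s by (simp add: mult_left_mono)
    show "s * t - A s \<le> \<bar>S\<bar> * \<bar>t\<bar>"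
    proof (cases "s \<ge> S")
      case True
      then have "s * \<bar>t\<bar> \<le> A s" using S[OF True] s by (simp add: pos_le_divide_eq mult.commute)
      moreover have "0 \<le> \<bar>S\<bar> * \<bar>t\<bar>" by simp
      ultimately show ?thesis using st by linarith
    next
      case False
      have "s * \<bar>t\<bar> \<le> \<bar>S\<bar> * \<bar>t\<bar>" using False s by (intro mult_right_mono) auto
      then show ?thesis using st young_nonneg[OF y, of s] s by linarith
    qed
  qed
qed

lemma conj_young_ge: "young A \<Longrightarrow> s > 0 \<Longrightarrow> s * t - A s \<le> conj_young A t"
  unfolding conj_young_def by (rule cSup_upper) (auto intro: bdd_above_conj_young)

lemma mono_conj_young:
  assumes "young A"
  shows "mono (conj_young A)"
proof (rule monoI)
  fix t t' :: real assume "t \<le> t'"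
  show "conj_young A t \<le> conj_young A t'"
    unfolding conj_young_def[of A t]
  proof (rule cSup_least)
    show "{s * t - A s |s. 0 < s} \<noteq> {}" by (auto intro: exI[of _ 1])
    fix x assume "x \<in> {s * t - A s |s. 0 < s}"
    then obtain s where "s > 0" "x = s * t - A s" by auto
    then show "x \<le> conj_young A t'"
      using conj_young_ge[OF assms \<open>s > 0\<close>, of t'] \<open>t \<le> t'\<close>
      by (smt (verit) mult_left_mono)
  qed
qed

lemma conj_young_block_integral_ge:
  assumes y: "young A" and K: "K > 0" and s: "s > 0" "A s < K * s^2"
  defines "t \<equiv> 2 * K * s"
  shows "ennreal (1 / (32 * K))
    \<le> (\<integral>\<^sup>+ u\<in>{t<..2*t}. ennreal (conj_young A u / u^2 / u) \<partial>lborel)"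
proof -
  have t0: "t > 0" using s K by (simp add: t_def)
  have pointwise: "1 / (32 * K * t) \<le> conj_young A u / (u^2 * u)" if u: "t < u" "u \<le> 2 * t" for u
  proof -
    have "t^2 / (4 * K) \<le> s * t - A s"
      using s(2) K unfolding t_def by (simp add: power2_eq_square field_simps)
    also have "\<dots> \<le> s * u - A s" using u s by simp
    also have "\<dots> \<le> conj_young A u" by (rule conj_young_ge[OF y s(1)])
    finally have lower: "t^2 / (4 * K) \<le> conj_young A u" .
    have "0 \<le> t^2 / (4 * K)" using K by simp
    with lower have nonneg: "0 \<le> conj_young A u" by linarith
    have "u^3 \<le> (2 * t)^3" using u t0 by (intro power_mono) auto
    then have upper: "u^2 * u \<le> 8 * t^3" by (simp add: power2_eq_square power3_eq_cube)
    have "1 / (32 * K * t) = (t^2 / (4 * K)) / (8 * t^3)"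
      using t0 K by (simp add: power2_eq_square power3_eq_cube field_simps)
    also have "\<dots> \<le> conj_young A u / (u^2 * u)"
      using lower upper nonneg u t0 K by (intro frac_le) auto
    finally show ?thesis .
  qed
  have "ennreal (1 / (32 * K)) = ennreal (1 / (32 * K * t)) * emeasure lborel {t<..2*t}"
    using t0 by (simp add: ennreal_mult''[symmetric])
  also have "\<dots> = (\<integral>\<^sup>+ u. ennreal (1 / (32 * K * t)) * indicator {t<..2*t} u \<partial>lborel)"
    by (simp add: nn_integral_cmult_indicator)
  also have "\<dots> \<le> (\<integral>\<^sup>+ u\<in>{t<..2*t}. ennreal (conj_young A u / u^2 / u) \<partial>lborel)"
    by (intro nn_integral_mono) (auto intro: ennreal_leI pointwise split: split_indicator)
  finally show ?thesis .
qed

lemma nn_integral_atLeast_infinite_if_dyadic_blocks: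
  fixes g :: "real \<Rightarrow> ennreal" and c :: real
  assumes g[measurable]: "g \<in> borel_measurable lborel" and c: "c > 0"
    and blocks: "\<And>T. T \<ge> 1 \<Longrightarrow> \<exists>t\<ge>T. ennreal c \<le> (\<integral>\<^sup>+ u\<in>{t<..2*t}. g u \<partial>lborel)"
  shows "(\<integral>\<^sup>+ u\<in>{1..}. g u \<partial>lborel) = \<infinity>"
proof -
  have partial: "\<exists>T\<ge>1. ennreal (real n * c) \<le> (\<integral>\<^sup>+ u\<in>{1..T}. g u \<partial>lborel)" for n
  proof (induction n)
    case 0
    then show ?case by (auto intro: exI[of _ 1])
  next
    case (Suc n)
    then obtain T where T: "T \<ge> 1" "ennreal (real n * c) \<le> (\<integral>\<^sup>+ u\<in>{1..T}. g u \<partial>lborel)"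
      by blast
    obtain t where t: "t \<ge> T" "ennreal c \<le> (\<integral>\<^sup>+ u\<in>{t<..2*t}. g u \<partial>lborel)"
      using blocks[OF T(1)] by blast
    have "ennreal (real (Suc n) * c) = ennreal (real n * c) + ennreal c"
      using c by (subst ennreal_plus[symmetric]) (auto simp: algebra_simps)
    also have "\<dots> \<le> (\<integral>\<^sup>+ u\<in>{1..T}. g u \<partial>lborel)
        + (\<integral>\<^sup>+ u\<in>{t<..2*t}. g u \<partial>lborel)"
      using T t by (intro add_mono) auto
    also have "\<dots> = (\<integral>\<^sup>+ u\<in>{1..T} \<union> {t<..2*t}. g u \<partial>lborel)"
      using t by (intro nn_integral_disjoint_pair[symmetric]) auto
    also have "\<dots> \<le> (\<integral>\<^sup>+ u\<in>{1..2*t}. g u \<partial>lborel)"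
      using t T by (intro nn_integral_mono) (auto split: split_indicator)
    finally show ?case using t T by (intro exI[of _ "2*t"]) auto
  qed
  have lower: "ennreal (real n * c) \<le> (\<integral>\<^sup>+ u\<in>{1..}. g u \<partial>lborel)" for n
  proof -
    obtain T where "ennreal (real n * c) \<le> (\<integral>\<^sup>+ u\<in>{1..T}. g u \<partial>lborel)"
      using partial by blast
    also have "\<dots> \<le> (\<integral>\<^sup>+ u\<in>{1..}. g u \<partial>lborel)"
      by (intro nn_integral_mono) (auto split: split_indicator)
    finally show ?thesis .
  qed
  show ?thesis
  proof (rule ccontr)
    assume "\<not> ?thesis"
    then obtain X where X: "(\<integral>\<^sup>+ u\<in>{1..}. g u \<partial>lborel) = ennreal X" "X \<ge> 0"
      by (cases "\<integral>\<^sup>+ u\<in>{1..}. g u \<partial>lborel" rule: ennreal_cases) auto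
    obtain n :: nat where "real n > X / c" using reals_Archimedean2 by blast
    moreover have "real n * c \<le> X" using lower[of n] X by (simp add: ennreal_le_iff)
    ultimately show False using c by (simp add: field_simps)
  qed
qed

lemma young_superquadratic:
  assumes y: "young A" and b: "B2 (conj_young A)" and K: "K > 0"
  shows "\<exists>t0>0. \<forall>s\<ge>t0. K * s^2 \<le> A s"
proof (rule ccontr)
  assume "\<not> ?thesis"
  then have small: "\<exists>s\<ge>T. A s < K * s^2" if "T > 0" for T
    using that by (auto simp: not_le)
  have "(\<integral>\<^sup>+ u\<in>{1..}. ennreal (conj_young A u / u^2 / u) \<partial>lborel) = \<infinity>"
  proof (rule nn_integral_atLeast_infinite_if_dyadic_blocks)
    have "conj_young A \<in> borel_measurable borel"
      by (rule borel_measurable_mono[OF mono_conj_young[OF y]])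
    then show "(\<lambda>u. ennreal (conj_young A u / u^2 / u)) \<in> borel_measurable lborel"
      by (simp add: measurable_lborel1)
    show "1 / (32 * K) > 0" using K by simp
    fix T :: real assume T: "T \<ge> 1"
    have "max T (T / (2 * K)) > 0" using T by auto
    then obtain s where s: "s \<ge> max T (T / (2 * K))" "A s < K * s^2"
      using small by blast
    have "s > 0" using s T by auto
    moreover have "2 * K * s \<ge> T" using s K by (auto simp: field_simps)
    ultimately show "\<exists>t\<ge>T. ennreal (1 / (32 * K))
        \<le> (\<integral>\<^sup>+ u\<in>{t<..2*t}. ennreal (conj_young A u / u^2 / u) \<partial>lborel)"
      using conj_young_block_integral_ge[OF y K _ s(2)] by blast
  qed
  then show False using b unfolding B2_def by simp
qed

lemma set_integrable_Icc_bounded: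
  fixes f :: "real \<Rightarrow> real"
  assumes "f \<in> borel_measurable borel" "\<And>x. x \<in> {a..b} \<Longrightarrow> \<bar>f x\<bar> \<le> M"
  shows "set_integrable lborel {a..b} f"
  unfolding set_integrable_def
proof (rule integrableI_bounded_set_indicator[where B=M])
  show "emeasure lborel {a..b} < \<infinity>" by (cases "a \<le> b") auto
qed (use assms in auto)

lemma avg_const: "a < b \<Longrightarrow> avg a b (\<lambda>_. c) = c"
  unfolding avg_def by (simp add: set_integral_const)

lemma avg_mono:
  assumes "a < b" "set_integrable lborel {a..b} f" "set_integrable lborel {a..b} g"
    "\<And>x. x \<in> {a..b} \<Longrightarrow> f x \<le> g x"
  shows "avg a b f \<le> avg a b g"
  unfolding avg_def using assms by (intro divide_right_mono set_integral_mono) auto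

lemma avg_le_const:
  fixes f :: "real \<Rightarrow> real"
  assumes "a < b" "f \<in> borel_measurable borel" "\<And>x. x \<in> {a..b} \<Longrightarrow> \<bar>f x\<bar> \<le> M"
    "\<And>x. x \<in> {a..b} \<Longrightarrow> f x \<le> c"
  shows "avg a b f \<le> c"
proof -
  have "set_integrable lborel {a..b} f" by (rule set_integrable_Icc_bounded[OF assms(2,3)])
  moreover have "set_integrable lborel {a..b} (\<lambda>_. c)"
    by (rule set_integrable_Icc_bounded[where M="\<bar>c\<bar>"]) auto
  ultimately have "avg a b f \<le> avg a b (\<lambda>_. c)" using assms by (intro avg_mono) auto
  then show ?thesis using avg_const[OF assms(1)] by simp
qed

lemma const_le_avg:
  fixes f :: "real \<Rightarrow> real"
  assumes "a < b" "f \<in> borel_measurable borel" "\<And>x. x \<in> {a..b} \<Longrightarrow> \<bar>f x\<bar> \<le> M"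
    "\<And>x. x \<in> {a..b} \<Longrightarrow> c \<le> f x"
  shows "c \<le> avg a b f"
proof -
  have "set_integrable lborel {a..b} f" by (rule set_integrable_Icc_bounded[OF assms(2,3)])
  moreover have "set_integrable lborel {a..b} (\<lambda>_. c)"
    by (rule set_integrable_Icc_bounded[where M="\<bar>c\<bar>"]) auto
  ultimately have "avg a b (\<lambda>_. c) \<le> avg a b f" using assms by (intro avg_mono) auto
  then show ?thesis using avg_const[OF assms(1)] by simp
qed

lemma set_integral_Icc_ge_subinterval:
  fixes f :: "real \<Rightarrow> real"
  assumes cd: "a \<le> c" "c \<le> d" "d \<le> b" and fm: "f \<in> borel_measurable borel"
    and fM: "\<And>x. x \<in> {a..b} \<Longrightarrow> \<bar>f x\<bar> \<le> M" and f0: "\<And>x. x \<in> {a..b} \<Longrightarrow> 0 \<le> f x"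
    and fv: "\<And>x. x \<in> {c..d} \<Longrightarrow> v \<le> f x" and v0: "0 \<le> v"
  shows "(d - c) * v \<le> (LINT x:{a..b}|lborel. f x)"
proof -
  have "(\<lambda>x. indicator {a..b} x *\<^sub>R (indicator {c..d} x * v)) = (\<lambda>x. indicator {c..d} x * v)"
    using cd by (auto split: split_indicator)
  then have "(d - c) * v = (LINT x:{a..b}|lborel. indicator {c..d} x * v)"
    unfolding set_lebesgue_integral_def using cd by simp
  also have "\<dots> \<le> (LINT x:{a..b}|lborel. f x)"
  proof (rule set_integral_mono)
    show "set_integrable lborel {a..b} f" by (rule set_integrable_Icc_bounded[OF fm fM])
    show "set_integrable lborel {a..b} (\<lambda>x. indicator {c..d} x * v)"
      by (rule set_integrable_Icc_bounded[where M=v]) (use v0 in \<open>auto split: split_indicator\<close>)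
    fix x assume "x \<in> {a..b}"
    then show "indicator {c..d} x * v \<le> f x"
      using fv f0 by (auto split: split_indicator)
  qed
  finally show ?thesis .
qed

lemma borel_measurable_young_comp:
  assumes y: "young A" and hm: "h \<in> borel_measurable borel" and h0: "\<And>x. 0 \<le> h x"
  shows "(\<lambda>x. A (h x)) \<in> borel_measurable borel"
proof -
  have "continuous_on {0..} A" using y unfolding young_def by blast
  then have "continuous_on UNIV (\<lambda>y. A (max y 0))"
    by (rule continuous_on_compose2) (auto intro!: continuous_intros)
  then have "(\<lambda>x. A (max (h x) 0)) \<in> borel_measurable borel"
    by (rule borel_measurable_continuous_on[OF _ hm])
  then show ?thesis using h0 by (simp add: max_absorb1)
qed

lemma young_avg_ge:
  assumes y: "young A" and p: "0 < p" "p \<le> r" and hm: "h \<in> borel_measurable borel"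
    and h0: "\<And>x. 0 \<le> h x" and hM: "\<And>x. x \<in> {0..r} \<Longrightarrow> h x \<le> M"
    and hv: "\<And>x. x \<in> {0..p} \<Longrightarrow> v \<le> h x" and v0: "0 \<le> v"
  shows "p / r * A v \<le> avg 0 r (\<lambda>x. A (h x))"
proof -
  have "(p - 0) * A v \<le> (LINT x:{0..r}|lborel. A (h x))"
  proof (rule set_integral_Icc_ge_subinterval[where M="A M"])
    show "(\<lambda>x. A (h x)) \<in> borel_measurable borel" by (rule borel_measurable_young_comp[OF y hm h0])
    fix x assume x: "x \<in> {0..r}"
    show "\<bar>A (h x)\<bar> \<le> A M"
      using young_nonneg[OF y h0[of x]] young_mono[OF y h0[of x] hM[OF x]] by simp
    show "0 \<le> A (h x)" by (rule young_nonneg[OF y h0])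
  next
    fix x assume "x \<in> {0..p}"
    then show "A v \<le> A (h x)" by (intro young_mono[OF y v0 hv])
  qed (use p young_nonneg[OF y v0] in auto)
  then show ?thesis unfolding avg_def using p by (simp add: divide_right_mono)
qed

lemma lux_ge:
  assumes "\<And>l. l > 0 \<Longrightarrow> avg a b (\<lambda>x. A (\<bar>f x\<bar> / l)) \<le> 1 \<Longrightarrow> X \<le> l"
  shows "ereal X \<le> lux A a b f"
  unfolding lux_def by (rule Inf_greatest) (use assms in auto)

subsection \<open>Oscillations of the two witnesses\<close>

definition sqrt_pos :: "real \<Rightarrow> real" where
  "sqrt_pos x = sqrt (max x 0)"

definition ind_unit :: "real \<Rightarrow> real" where
  "ind_unit x = indicator {0..1} x"

lemma sqrt_pos_measurable[measurable]: "sqrt_pos \<in> borel_measurable borel"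
  unfolding sqrt_pos_def by measurable

lemma ind_unit_measurable[measurable]: "ind_unit \<in> borel_measurable borel"
  unfolding ind_unit_def by measurable

lemma isCont_sqrt_pos: "isCont sqrt_pos x"
  unfolding sqrt_pos_def by (intro continuous_intros)

lemma mono_sqrt_pos: "mono sqrt_pos"
  unfolding sqrt_pos_def by (rule monoI) simp

lemma sqrt_pos_diff_le:
  assumes "a \<le> b"
  shows "sqrt_pos b - sqrt_pos a \<le> sqrt (b - a)"
proof -
  have "sqrt (max b 0) \<le> sqrt (max a 0) + sqrt (max b 0 - max a 0)"
    using sqrt_add_le_add_sqrt[of "max a 0" "max b 0 - max a 0"] assms by simp
  also have "sqrt (max b 0 - max a 0) \<le> sqrt (b - a)" using assms by simp
  finally show ?thesis unfolding sqrt_pos_def by simp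
qed

lemma osc_measurable[measurable]:
  "g \<in> borel_measurable borel \<Longrightarrow> osc a b g \<in> borel_measurable borel"
  unfolding osc_def by (auto intro!: borel_measurable_abs borel_measurable_diff)

lemma abs_osc_le_of_mono:
  fixes g :: "real \<Rightarrow> real"
  assumes ab: "a < b" and g: "g \<in> borel_measurable borel" "mono_on {a..b} g"
    and x: "x \<in> {a..b}"
  shows "\<bar>osc a b g x\<bar> \<le> g b - g a"
proof -
  have between: "g a \<le> g y \<and> g y \<le> g b" if "y \<in> {a..b}" for y
    using that ab by (auto intro: mono_onD[OF g(2)])
  have bound: "\<bar>g y\<bar> \<le> \<bar>g a\<bar> + \<bar>g b\<bar>" if "y \<in> {a..b}" for y
    using between[OF that] by linarith
  have "g a \<le> avg a b g" using between by (intro const_le_avg[OF ab g(1) bound]) auto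
  moreover have "avg a b g \<le> g b" using between by (intro avg_le_const[OF ab g(1) bound]) auto
  ultimately show ?thesis using between[OF x] unfolding osc_def by auto
qed

lemma abs_osc_sqrt_pos_le:
  assumes "a < b" "x \<in> {a..b}"
  shows "\<bar>osc a b sqrt_pos x\<bar> \<le> sqrt (b - a)"
  using abs_osc_le_of_mono[OF assms(1) sqrt_pos_measurable mono_imp_mono_on[OF mono_sqrt_pos] assms(2)]
    sqrt_pos_diff_le[of a b] assms(1) by linarith

lemma set_integral_ind_unit:
  "(LINT x:{a..b}|lborel. ind_unit x) = measure lborel ({a..b} \<inter> {0..1})"
proof -
  have "(\<lambda>x. indicator {a..b} x *\<^sub>R ind_unit x) = indicator ({a..b} \<inter> {0..1})"
    by (auto simp: ind_unit_def split: split_indicator)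
  then show ?thesis unfolding set_lebesgue_integral_def by simp
qed

lemma set_integral_ind_unit_bounds:
  assumes "a < b"
  shows "0 \<le> (LINT x:{a..b}|lborel. ind_unit x)" "(LINT x:{a..b}|lborel. ind_unit x) \<le> 1"
    "(LINT x:{a..b}|lborel. ind_unit x) \<le> b - a"
proof -
  show "0 \<le> (LINT x:{a..b}|lborel. ind_unit x)" by (simp add: set_integral_ind_unit)
  have "measure lborel ({a..b} \<inter> {0..1}) \<le> measure lborel {0..1::real}"
    by (rule measure_mono_fmeasurable) (auto simp: fmeasurable_def)
  then show "(LINT x:{a..b}|lborel. ind_unit x) \<le> 1" by (simp add: set_integral_ind_unit)
  have "measure lborel ({a..b} \<inter> {0..1}) \<le> measure lborel {a..b}"
    by (rule measure_mono_fmeasurable) (use assms in \<open>auto simp: fmeasurable_def\<close>)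
  then show "(LINT x:{a..b}|lborel. ind_unit x) \<le> b - a"
    using assms by (simp add: set_integral_ind_unit)
qed

lemma abs_osc_ind_unit_le:
  assumes "a < b"
  shows "\<bar>osc a b ind_unit x\<bar> \<le> 1"
proof -
  have "0 \<le> avg a b ind_unit" "avg a b ind_unit \<le> 1"
    using set_integral_ind_unit_bounds[OF assms] assms unfolding avg_def by auto
  then show ?thesis unfolding osc_def by (auto simp: ind_unit_def split: split_indicator)
qed

lemma set_integral_osc_ind_unit_sq:
  assumes ab: "a < b"
  defines "m \<equiv> (LINT x:{a..b}|lborel. ind_unit x)"
  shows "(LINT x:{a..b}|lborel. (osc a b ind_unit x)^2) = m - m^2 / (b - a)"
proof -
  define \<mu> where "\<mu> = m / (b - a)"
  have mean: "avg a b ind_unit = \<mu>" unfolding avg_def \<mu>_def m_def ..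
  have pointwise: "(osc a b ind_unit x)^2 = ind_unit x * (1 - 2 * \<mu>) + \<mu>^2" for x
    unfolding osc_def mean
    by (auto simp: ind_unit_def power2_eq_square algebra_simps split: split_indicator)
  have "set_integrable lborel {a..b} ind_unit"
    by (rule set_integrable_Icc_bounded[where M=1]) (auto simp: ind_unit_def)
  moreover have "set_integrable lborel {a..b} (\<lambda>_. \<mu>^2)"
    by (rule set_integrable_Icc_bounded[where M="\<mu>^2"]) auto
  ultimately have "(LINT x:{a..b}|lborel. ind_unit x * (1 - 2 * \<mu>) + \<mu>^2)
      = (LINT x:{a..b}|lborel. ind_unit x * (1 - 2 * \<mu>)) + (LINT x:{a..b}|lborel. \<mu>^2)"
    by (intro set_integral_add(2)) auto
  also have "\<dots> = m * (1 - 2 * \<mu>) + (b - a) * \<mu>^2"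
    using ab by (simp add: set_integral_const m_def)
  also have "\<dots> = m - m^2 / (b - a)"
  proof -
    have "m * (1 - 2 * (m / r)) + r * (m / r)^2 = m - m^2 / r" if "r > 0" for r
      using that by (simp add: field_simps power2_eq_square)
    then show ?thesis using ab unfolding \<mu>_def by simp
  qed
  finally show ?thesis by (simp add: pointwise)
qed

lemma avg_osc_sqrt_pos_sq_le:
  assumes "a < b"
  shows "avg a b (\<lambda>x. (osc a b sqrt_pos x)^2) \<le> b - a"
proof -
  have "(osc a b sqrt_pos x)^2 \<le> b - a" if "x \<in> {a..b}" for x
    using power_mono[OF abs_osc_sqrt_pos_le[OF assms that], of 2] assms by simp
  then show ?thesis by (intro avg_le_const[OF assms, where M="b - a"]) auto
qed

lemma length_mult_avg_osc_ind_unit_sq_le: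
  assumes "a < b"
  shows "(b - a) * avg a b (\<lambda>x. (osc a b ind_unit x)^2) \<le> 1"
proof -
  define m where "m = (LINT x:{a..b}|lborel. ind_unit x)"
  have "(b - a) * avg a b (\<lambda>x. (osc a b ind_unit x)^2) = m - m^2 / (b - a)"
    using assms set_integral_osc_ind_unit_sq[OF assms] unfolding avg_def m_def by simp
  also have "\<dots> \<le> m" using assms by simp
  also have "\<dots> \<le> 1" using set_integral_ind_unit_bounds[OF assms] by (simp add: m_def)
  finally show ?thesis .
qed

lemma sqrt_pos_ind_unit_S2_term_le:
  assumes ab: "a < b"
  shows "sqrt (avg a b (\<lambda>x. (osc a b sqrt_pos x)^2)) * sqrt (avg a b (\<lambda>x. (osc a b ind_unit x)^2)) \<le> 1"
proof -
  have "0 \<le> avg a b (\<lambda>x. (osc a b ind_unit x)^2)"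
    using abs_osc_ind_unit_le[OF ab] by (intro const_le_avg[OF ab, where M=1]) (auto simp: abs_square_le_1)
  then have "avg a b (\<lambda>x. (osc a b sqrt_pos x)^2) * avg a b (\<lambda>x. (osc a b ind_unit x)^2) \<le> 1"
    using avg_osc_sqrt_pos_sq_le[OF ab] length_mult_avg_osc_ind_unit_sq_le[OF ab]
    by (meson mult_right_mono order_trans)
  then show ?thesis by (simp add: real_sqrt_mult[symmetric])
qed

lemma sqrt_pos_ind_unit_T2_term_le:
  assumes ab: "a < b"
  shows "sqrt (avg a b (\<lambda>x. (osc a b sqrt_pos x)^2 * (osc a b ind_unit x)^2)) \<le> 1"
proof -
  have osc1: "(osc a b sqrt_pos x)^2 \<le> b - a" if "x \<in> {a..b}" for x
    using power_mono[OF abs_osc_sqrt_pos_le[OF ab that], of 2] ab by simp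
  have osc2: "(osc a b ind_unit x)^2 \<le> 1" for x
    using abs_osc_ind_unit_le[OF ab] by (simp add: abs_square_le_1)
  have prod: "(osc a b sqrt_pos x)^2 * (osc a b ind_unit x)^2 \<le> b - a" if "x \<in> {a..b}" for x
    using mult_mono[OF osc1[OF that] osc2] ab by simp
  have "avg a b (\<lambda>x. (osc a b sqrt_pos x)^2 * (osc a b ind_unit x)^2)
      \<le> avg a b (\<lambda>x. (b - a) * (osc a b ind_unit x)^2)"
  proof (rule avg_mono[OF ab])
    show "set_integrable lborel {a..b} (\<lambda>x. (osc a b sqrt_pos x)^2 * (osc a b ind_unit x)^2)"
      by (intro set_integrable_Icc_bounded[where M="b - a"]) (auto simp: abs_mult prod)
    show "set_integrable lborel {a..b} (\<lambda>x. (b - a) * (osc a b ind_unit x)^2)"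
      using osc2 ab by (intro set_integrable_Icc_bounded[where M="b - a"]) (auto intro: mult_left_le)
    show "(osc a b sqrt_pos x)^2 * (osc a b ind_unit x)^2 \<le> (b - a) * (osc a b ind_unit x)^2"
      if "x \<in> {a..b}" for x
      using osc1[OF that] by (intro mult_right_mono) auto
  qed
  also have "\<dots> = (b - a) * avg a b (\<lambda>x. (osc a b ind_unit x)^2)"
    unfolding avg_def by simp
  also have "\<dots> \<le> 1" by (rule length_mult_avg_osc_ind_unit_sq_le[OF ab])
  finally show ?thesis by simp
qed

lemma osc_sqrt_pos_ge:
  assumes r: "r \<ge> 64" and x: "x \<in> {0..r/64}"
  shows "sqrt r / 4 \<le> osc 0 r sqrt_pos x"
proof -
  have sr: "sqrt (r/4) = sqrt r / 2" "sqrt (r/64) = sqrt r / 8" by (simp_all add: real_sqrt_divide)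
  have "(r - r/4) * (sqrt r / 2) \<le> (LINT x:{0..r}|lborel. sqrt_pos x)"
  proof (rule set_integral_Icc_ge_subinterval[where M="sqrt r"])
    fix y assume "y \<in> {r/4..r}"
    then have "sqrt (r/4) \<le> sqrt_pos y" by (auto simp: sqrt_pos_def)
    then show "sqrt r / 2 \<le> sqrt_pos y" using sr by simp
  qed (use r in \<open>auto simp: sqrt_pos_def\<close>)
  then have "3 * sqrt r / 8 \<le> avg 0 r sqrt_pos" unfolding avg_def using r by (simp add: field_simps)
  moreover have "sqrt_pos x \<le> sqrt (r/64)" using x by (auto simp: sqrt_pos_def)
  ultimately show ?thesis using sr unfolding osc_def by (auto simp: abs_if)
qed

lemma osc_ind_unit_ge:
  assumes r: "r \<ge> 2" and x: "x \<in> {0..1}"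
  shows "1/2 \<le> osc 0 r ind_unit x"
proof -
  have "{0..r} \<inter> {0..1} = {0..1::real}" using r by auto
  then have "avg 0 r ind_unit = 1 / r" unfolding avg_def set_integral_ind_unit by simp
  moreover have "1 / r \<le> 1/2" using r by (simp add: field_simps)
  ultimately show ?thesis using x unfolding osc_def by (auto simp: ind_unit_def)
qed

subsection \<open>Luxemburg averages of the oscillations on [0,r]\<close>

lemma superquadratic_level_ge:
  fixes C :: "real \<Rightarrow> real"
  assumes growth: "\<And>s. s \<ge> t0 \<Longrightarrow> K * s^2 \<le> C s" and t0: "t0 > 0" and K: "K > 0"
    and r: "K * t0^2 \<le> r" and l: "l > 0" and v: "v > 0" and level: "C (v / l) \<le> r"
  shows "v * sqrt (K / r) \<le> l"
proof -
  have "0 < K * t0^2" using K t0 by simp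
  then have r0: "r > 0" using r by linarith
  show ?thesis
  proof (cases "v / l \<ge> t0")
    case True
    have "K * (v / l)^2 \<le> r" using growth[OF True] level by simp
    then have "K * v^2 \<le> r * l^2" using l by (simp add: power_divide pos_divide_le_eq)
    then have "K * v^2 / r \<le> l^2" using r0 by (simp add: pos_divide_le_eq mult.commute)
    moreover have "(v * sqrt (K / r))^2 = K * v^2 / r" using K r0 by (simp add: power_mult_distrib)
    ultimately have "(v * sqrt (K / r))^2 \<le> l^2" by simp
    from power2_le_imp_le[OF this] show ?thesis using l by simp
  next
    case False
    then have "v < t0 * l" using l by (simp add: not_le pos_divide_less_eq)
    then have "v / t0 < l" using t0 by (simp add: divide_less_eq mult.commute)
    have "K / r = (K * t0^2) / (r * t0^2)" using t0 by simp
    also have "\<dots> \<le> r / (r * t0^2)" using r r0 t0 by (intro divide_right_mono) auto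
    also have "\<dots> = 1 / t0^2" using r0 by simp
    finally have "sqrt (K / r) \<le> 1 / t0"
      using t0 real_sqrt_le_mono by (fastforce simp: real_sqrt_divide)
    then have "v * sqrt (K / r) \<le> v / t0" using v by (simp add: mult_left_mono divide_inverse)
    with \<open>v / t0 < l\<close> show ?thesis by simp
  qed
qed

lemma lux_osc_sqrt_pos_ge:
  assumes y: "young A" and growth: "\<And>s. s \<ge> t0 \<Longrightarrow> s^2 \<le> A s" and t0: "t0 > 0"
    and r: "r \<ge> 64"
  shows "ereal (sqrt r / (4 * max t0 8)) \<le> lux A 0 r (osc 0 r sqrt_pos)"
proof (rule lux_ge)
  define c where "c = max t0 8"
  fix l :: real assume l: "l > 0" and av: "avg 0 r (\<lambda>x. A (\<bar>osc 0 r sqrt_pos x\<bar> / l)) \<le> 1"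
  have "(r/64) / r * A (sqrt r / 4 / l) \<le> avg 0 r (\<lambda>x. A (\<bar>osc 0 r sqrt_pos x\<bar> / l))"
  proof (rule young_avg_ge[OF y, where M="sqrt r / l"])
    fix x :: real assume "x \<in> {0..r}"
    then have "\<bar>osc 0 r sqrt_pos x\<bar> \<le> sqrt (r - 0)" using r by (intro abs_osc_sqrt_pos_le) auto
    then show "\<bar>osc 0 r sqrt_pos x\<bar> / l \<le> sqrt r / l" using l by (simp add: divide_right_mono)
  next
    fix x :: real assume "x \<in> {0..r/64}"
    then have "sqrt r / 4 \<le> osc 0 r sqrt_pos x" using r by (intro osc_sqrt_pos_ge) auto
    then show "sqrt r / 4 / l \<le> \<bar>osc 0 r sqrt_pos x\<bar> / l"
      using l by (simp add: divide_right_mono del: divide_divide_eq_left)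
  qed (use r l in auto)
  then have level: "A (sqrt r / 4 / l) \<le> 64" using av r by simp
  have c8: "8 \<le> c" by (simp add: c_def)
  \<comment> \<open>rescale the growth bound so that the level 64 is admissible in the lemma above\<close>
  have growth': "64 / c^2 * s^2 \<le> A s" if "s \<ge> c" for s
  proof -
    from power_mono[OF c8, of 2] have "64 \<le> c^2" by simp
    then have "64 / c^2 \<le> 1" using c8 by (simp add: pos_divide_le_eq)
    then have "64 / c^2 * s^2 \<le> s^2" using mult_left_le_one_le[of "s^2" "64 / c^2"] by simp
    also have "\<dots> \<le> A s" using that growth by (simp add: c_def)
    finally show ?thesis .
  qed
  have "sqrt r / 4 * sqrt (64 / c^2 / 64) \<le> l"
    by (rule superquadratic_level_ge[OF growth' _ _ _ l _ level]) (use r c8 in auto)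
  then show "sqrt r / (4 * max t0 8) \<le> l"
    by (simp add: c_def real_sqrt_divide)
qed

lemma lux_osc_ind_unit_ge:
  assumes y: "young B" and growth: "\<And>s. s \<ge> t0 \<Longrightarrow> K * s^2 \<le> B s" and t0: "t0 > 0"
    and K: "K > 0" and r: "r \<ge> 2" "r \<ge> K * t0^2"
  shows "ereal (sqrt (K / r) / 2) \<le> lux B 0 r (osc 0 r ind_unit)"
proof (rule lux_ge)
  fix l :: real assume l: "l > 0" and av: "avg 0 r (\<lambda>x. B (\<bar>osc 0 r ind_unit x\<bar> / l)) \<le> 1"
  have "1 / r * B ((1/2) / l) \<le> avg 0 r (\<lambda>x. B (\<bar>osc 0 r ind_unit x\<bar> / l))"
  proof (rule young_avg_ge[OF y, where M="1 / l"])
    fix x :: real assume "x \<in> {0..r}"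
    have "\<bar>osc 0 r ind_unit x\<bar> \<le> 1" using r by (intro abs_osc_ind_unit_le) auto
    then show "\<bar>osc 0 r ind_unit x\<bar> / l \<le> 1 / l" using l by (simp add: divide_right_mono)
  next
    fix x :: real assume "x \<in> {0..1}"
    then have "1/2 \<le> osc 0 r ind_unit x" using r by (intro osc_ind_unit_ge) auto
    then show "(1/2) / l \<le> \<bar>osc 0 r ind_unit x\<bar> / l"
      using l by (simp add: divide_right_mono del: divide_divide_eq_left)
  qed (use r l in auto)
  then have "B ((1/2) / l) \<le> r * avg 0 r (\<lambda>x. B (\<bar>osc 0 r ind_unit x\<bar> / l))"
    using r by (simp add: field_simps)
  also have "\<dots> \<le> r" using av r by (simp add: mult_left_le)
  finally have "1/2 * sqrt (K / r) \<le> l"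
    by (intro superquadratic_level_ge[OF growth t0 K r(2) l]) auto
  then show "sqrt (K / r) / 2 \<le> l" by simp
qed

lemma lux_osc_mult_ge:
  assumes y: "young C" and growth: "\<And>s. s \<ge> t0 \<Longrightarrow> K * s^2 \<le> C s" and t0: "t0 > 0"
    and K: "K > 0" and r: "r \<ge> 64" "r \<ge> K * t0^2"
  shows "ereal (sqrt K / 8) \<le> lux C 0 r (\<lambda>x. osc 0 r sqrt_pos x * osc 0 r ind_unit x)"
proof (rule lux_ge)
  fix l :: real
  assume l: "l > 0" and av: "avg 0 r (\<lambda>x. C (\<bar>osc 0 r sqrt_pos x * osc 0 r ind_unit x\<bar> / l)) \<le> 1"
  have "1 / r * C (sqrt r / 8 / l) \<le> avg 0 r (\<lambda>x. C (\<bar>osc 0 r sqrt_pos x * osc 0 r ind_unit x\<bar> / l))"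
  proof (rule young_avg_ge[OF y, where M="sqrt r / l"])
    fix x :: real assume "x \<in> {0..r}"
    then have "\<bar>osc 0 r sqrt_pos x\<bar> \<le> sqrt (r - 0)" using r by (intro abs_osc_sqrt_pos_le) auto
    moreover have "\<bar>osc 0 r ind_unit x\<bar> \<le> 1" using r by (intro abs_osc_ind_unit_le) auto
    ultimately have "\<bar>osc 0 r sqrt_pos x * osc 0 r ind_unit x\<bar> \<le> sqrt r * 1"
      unfolding abs_mult using r by (intro mult_mono) auto
    then show "\<bar>osc 0 r sqrt_pos x * osc 0 r ind_unit x\<bar> / l \<le> sqrt r / l"
      using l by (simp add: divide_right_mono)
  next
    fix x :: real assume x: "x \<in> {0..1}"
    then have "sqrt r / 4 \<le> osc 0 r sqrt_pos x" using r by (intro osc_sqrt_pos_ge) auto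
    moreover have "1/2 \<le> osc 0 r ind_unit x" using r x by (intro osc_ind_unit_ge) auto
    ultimately have "sqrt r / 4 * (1/2) \<le> osc 0 r sqrt_pos x * osc 0 r ind_unit x"
      by (intro mult_mono) (auto simp: osc_def)
    then show "sqrt r / 8 / l \<le> \<bar>osc 0 r sqrt_pos x * osc 0 r ind_unit x\<bar> / l"
      using l by (simp add: divide_right_mono del: divide_divide_eq_left)
  qed (use r l in auto)
  then have "C (sqrt r / 8 / l) \<le> r * avg 0 r (\<lambda>x. C (\<bar>osc 0 r sqrt_pos x * osc 0 r ind_unit x\<bar> / l))"
    using r by (simp add: field_simps)
  also have "\<dots> \<le> r" using av r by (simp add: mult_left_le)
  finally have "sqrt r / 8 * sqrt (K / r) \<le> l"
    using r by (intro superquadratic_level_ge[OF growth t0 K r(2) l]) auto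
  then show "sqrt K / 8 \<le> l" using r by (simp add: real_sqrt_divide)
qed

subsection \<open>The double commutator\<close>

lemma hilbert_eq_integral_off_support:
  fixes g :: "real \<Rightarrow> real"
  assumes g: "\<And>y. y \<notin> {a..b} \<Longrightarrow> g y = 0" and x: "b < x"
  shows "hilbert g x = (LINT y|lborel. g y / (x - y))"
proof -
  have "eventually (\<lambda>\<epsilon>. (LINT y:{y. \<epsilon> < \<bar>x - y\<bar>}|lborel. g y / (x - y))
      = (LINT y|lborel. g y / (x - y))) (at_right 0)"
  proof (rule eventually_mono[OF eventually_at_right_real])
    show "0 < x - b" using x by simp
    fix e :: real assume e: "e \<in> {0<..<x - b}"
    have restrict: "indicator {y. e < \<bar>x - y\<bar>} y *\<^sub>R (g y / (x - y)) = g y / (x - y)" for y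
    proof (cases "e < \<bar>x - y\<bar>")
      case False
      then have "b < y" using e by auto
      then show ?thesis using g by simp
    qed simp
    show "(LINT y:{y. e < \<bar>x - y\<bar>}|lborel. g y / (x - y)) = (LINT y|lborel. g y / (x - y))"
      unfolding set_lebesgue_integral_def restrict ..
  qed
  then show ?thesis unfolding hilbert_def
    by (intro tendsto_Lim[OF trivial_limit_at_right_real] tendsto_eventually)
qed

lemma double_comm_ind_unit_eq:
  assumes x: "1 < x"
  shows "comm ind_unit (comm sqrt_pos hilbert) ind_unit x
       = (LINT y:{0..1}|lborel. (sqrt_pos y - sqrt_pos x) / (x - y))"
proof -
  have cont: "isCont (\<lambda>y. 1 / (x - y)) y" "isCont (\<lambda>y. sqrt_pos y / (x - y)) y" if "y \<le> 1" for y
    using that x by (auto intro!: continuous_intros isCont_sqrt_pos)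
  have int1: "set_integrable lborel {0..1} (\<lambda>y. 1 / (x - y))"
    using cont by (intro borel_integrable_atLeastAtMost' continuous_at_imp_continuous_on) auto
  have int2: "set_integrable lborel {0..1} (\<lambda>y. sqrt_pos y / (x - y))"
    using cont by (intro borel_integrable_atLeastAtMost' continuous_at_imp_continuous_on) auto
  have hilbert_ind: "hilbert ind_unit x = (LINT y:{0..1}|lborel. 1 / (x - y))"
    using x unfolding set_lebesgue_integral_def
    by (subst hilbert_eq_integral_off_support[where a=0 and b=1])
      (auto simp: ind_unit_def intro!: Bochner_Integration.integral_cong split: split_indicator)
  have hilbert_mult: "hilbert (\<lambda>y. sqrt_pos y * ind_unit y) x
      = (LINT y:{0..1}|lborel. sqrt_pos y / (x - y))"
    using x unfolding set_lebesgue_integral_def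
    by (subst hilbert_eq_integral_off_support[where a=0 and b=1])
      (auto simp: ind_unit_def intro!: Bochner_Integration.integral_cong split: split_indicator)
  have idem: "ind_unit y * ind_unit y = ind_unit y" for y
    by (auto simp: ind_unit_def split: split_indicator)
  have "ind_unit x = 0" using x by (simp add: ind_unit_def)
  then have "comm ind_unit (comm sqrt_pos hilbert) ind_unit x
      = (LINT y:{0..1}|lborel. sqrt_pos y / (x - y)) - sqrt_pos x * (LINT y:{0..1}|lborel. 1 / (x - y))"
    unfolding comm_def mult.assoc idem hilbert_ind hilbert_mult by simp
  also have "\<dots> = (LINT y:{0..1}|lborel. sqrt_pos y / (x - y))
      - (LINT y:{0..1}|lborel. sqrt_pos x * (1 / (x - y)))"
    by (simp only: set_integral_mult_right)
  also have "\<dots> = (LINT y:{0..1}|lborel. sqrt_pos y / (x - y) - sqrt_pos x * (1 / (x - y)))"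
    using int1 int2 by (intro set_integral_diff(2)[symmetric] set_integrable_mult_right)
  also have "\<dots> = (LINT y:{0..1}|lborel. (sqrt_pos y - sqrt_pos x) / (x - y))"
    by (simp add: diff_divide_distrib)
  finally show ?thesis .
qed

lemma double_comm_ind_unit_sq_ge:
  assumes x: "1 < x"
  shows "1 / (4 * x) \<le> (comm ind_unit (comm sqrt_pos hilbert) ind_unit x)^2"
proof -
  have sx: "sqrt x > 1" using x by simp
  have pointwise: "(sqrt_pos y - sqrt_pos x) / (x - y) \<le> - 1 / (2 * sqrt x)"
    if y: "y \<in> {0..1}" for y
  proof -
    have sy: "0 \<le> sqrt y" "sqrt y \<le> 1" using y by auto
    have "(sqrt x - sqrt y) * (sqrt x + sqrt y) = sqrt x * sqrt x - sqrt y * sqrt y"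
      by (simp add: algebra_simps)
    then have den: "x - y = (sqrt x - sqrt y) * (sqrt x + sqrt y)" using x y by simp
    have num: "sqrt_pos y - sqrt_pos x = - (sqrt x - sqrt y)" using x y by (simp add: sqrt_pos_def)
    have cancel: "- p / (p * q) = - 1 / q" if "p \<noteq> 0" for p q :: real
      using that by simp
    have "(sqrt_pos y - sqrt_pos x) / (x - y) = - 1 / (sqrt x + sqrt y)"
      unfolding num den by (rule cancel) (use sx sy in linarith)
    also have "\<dots> \<le> - 1 / (2 * sqrt x)"
    proof -
      have "0 < sqrt x + sqrt y" "sqrt x + sqrt y \<le> 2 * sqrt x" using sx sy by linarith+
      then have "1 / (2 * sqrt x) \<le> 1 / (sqrt x + sqrt y)"
        by (intro divide_left_mono) (use sx in auto)
      then show ?thesis by simp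
    qed
    finally show ?thesis .
  qed
  have "continuous_on {0..1} (\<lambda>y. (sqrt_pos y - sqrt_pos x) / (x - y))"
    using x by (intro continuous_at_imp_continuous_on ballI)
      (auto intro!: continuous_intros isCont_sqrt_pos)
  then have "comm ind_unit (comm sqrt_pos hilbert) ind_unit x
      \<le> (LINT y:{0..1::real}|lborel. - 1 / (2 * sqrt x))"
    unfolding double_comm_ind_unit_eq[OF x]
    using pointwise by (intro set_integral_mono borel_integrable_atLeastAtMost') auto
  then have "1 / (2 * sqrt x) \<le> \<bar>comm ind_unit (comm sqrt_pos hilbert) ind_unit x\<bar>"
    by (simp add: set_integral_const)
  from power_mono[OF this, of 2] show ?thesis
    using x by (simp add: power_divide power_mult_distrib)
qed

lemma nn_integral_double_comm_ind_unit_sq_infinite: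
  "(\<integral>\<^sup>+ x. ennreal ((comm ind_unit (comm sqrt_pos hilbert) ind_unit x)\<^sup>2) \<partial>lborel) = \<infinity>"
  (is "?I = \<infinity>")
proof -
  have lower: "ennreal (a / 4) \<le> ?I" if a: "a \<ge> 0" for a
  proof -
    have "(\<integral>\<^sup>+ x. ennreal (1 / (4 * x)) * indicator {2..2 * exp a} x \<partial>lborel)
        = ennreal (ln (2 * exp a) / 4 - ln 2 / 4)"
      using a by (intro nn_integral_FTC_Icc[where F="\<lambda>x. ln x / 4"])
        (auto intro!: derivative_eq_intros)
    also have "\<dots> = ennreal (a / 4)" by (simp add: ln_mult add_divide_distrib)
    finally have "ennreal (a / 4)
        = (\<integral>\<^sup>+ x. ennreal (1 / (4 * x)) * indicator {2..2 * exp a} x \<partial>lborel)" ..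
    also have "\<dots> \<le> ?I"
      using double_comm_ind_unit_sq_ge
      by (intro nn_integral_mono) (auto intro: ennreal_leI split: split_indicator)
    finally show ?thesis .
  qed
  show ?thesis
  proof (rule ccontr)
    assume "?I \<noteq> \<infinity>"
    then obtain R where "?I = ennreal R" "R \<ge> 0" by (cases ?I rule: ennreal_cases) auto
    with lower[of "4 * R + 4"] show False by (simp add: ennreal_le_iff)
  qed
qed

lemma Linf_loc_sqrt_pos: "Linf_loc sqrt_pos"
  unfolding Linf_loc_def
proof (intro conjI allI)
  fix a c :: real
  show "\<exists>M. AE x in lborel. x \<in> {a..c} \<longrightarrow> \<bar>sqrt_pos x\<bar> \<le> M"
    by (rule exI[of _ "sqrt_pos c"]) (auto simp: sqrt_pos_def)
qed simp

lemma Linf_loc_ind_unit: "Linf_loc ind_unit"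
  unfolding Linf_loc_def
proof (intro conjI allI)
  fix a c :: real
  show "\<exists>M. AE x in lborel. x \<in> {a..c} \<longrightarrow> \<bar>ind_unit x\<bar> \<le> M"
    by (rule exI[of _ 1]) (auto simp: ind_unit_def)
qed simp

lemma S2_sqrt_pos_ind_unit_le: "S2 sqrt_pos ind_unit \<le> 1"
  unfolding S2_def by (rule SUP_least) (auto dest: sqrt_pos_ind_unit_S2_term_le)

lemma T2_sqrt_pos_ind_unit_le: "T2 sqrt_pos ind_unit \<le> 1"
  unfolding T2_def by (rule SUP_least) (auto dest: sqrt_pos_ind_unit_T2_term_le)

lemma SAB_sqrt_pos_ind_unit:
  assumes "young A" "young B" "B2 (conj_young A)" "B2 (conj_young B)"
  shows "SAB A B sqrt_pos ind_unit = \<infinity>"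
proof (rule ereal_top)
  fix M :: real
  obtain t0 where t0: "t0 > 0" "\<And>s. s \<ge> t0 \<Longrightarrow> 1 * s^2 \<le> A s"
    using young_superquadratic[OF assms(1,3), of 1] by auto
  define c where "c = max t0 8"
  define K where "K = (8 * c * (\<bar>M\<bar> + 1))^2"
  have c0: "c > 0" by (simp add: c_def)
  then have K0: "K > 0" by (simp add: K_def)
  obtain t1 where t1: "t1 > 0" "\<And>s. s \<ge> t1 \<Longrightarrow> K * s^2 \<le> B s"
    using young_superquadratic[OF assms(2,4) K0] by blast
  define r where "r = max 64 (K * t1^2)"
  have r: "r \<ge> 64" "r \<ge> K * t1^2" "r \<ge> 2" by (auto simp: r_def)
  have "sqrt r / (4 * c) * (sqrt (K / r) / 2) = sqrt K / (8 * c)"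
    using r c0 by (simp add: real_sqrt_divide field_simps)
  also have "\<dots> = \<bar>M\<bar> + 1" using c0 unfolding K_def by simp
  finally have "ereal M \<le> ereal (sqrt r / (4 * c)) * ereal (sqrt (K / r) / 2)" by simp
  also have "\<dots> \<le> lux A 0 r (osc 0 r sqrt_pos) * lux B 0 r (osc 0 r ind_unit)"
    using lux_osc_sqrt_pos_ge[OF assms(1) _ t0(1) r(1)] t0(2)
      lux_osc_ind_unit_ge[OF assms(2) t1(2) t1(1) K0 r(3) r(2)] r c0 K0
    by (intro ereal_mult_mono') (auto simp: c_def)
  also have "\<dots> \<le> SAB A B sqrt_pos ind_unit"
    unfolding SAB_def by (rule SUP_upper2[of "(0, r)"]) (use r in auto)
  finally show "ereal M \<le> SAB A B sqrt_pos ind_unit" .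
qed

lemma TC_sqrt_pos_ind_unit:
  assumes "young C" "B2 (conj_young C)"
  shows "TC C sqrt_pos ind_unit = \<infinity>"
proof (rule ereal_top)
  fix M :: real
  define K where "K = (8 * (\<bar>M\<bar> + 1))^2"
  have K0: "K > 0" by (simp add: K_def)
  obtain t0 where t0: "t0 > 0" "\<And>s. s \<ge> t0 \<Longrightarrow> K * s^2 \<le> C s"
    using young_superquadratic[OF assms K0] by blast
  define r where "r = max 64 (K * t0^2)"
  have r: "r \<ge> 64" "r \<ge> K * t0^2" by (auto simp: r_def)
  have "ereal M \<le> ereal (sqrt K / 8)" unfolding K_def by simp
  also have "\<dots> \<le> lux C 0 r (\<lambda>x. osc 0 r sqrt_pos x * osc 0 r ind_unit x)"
    by (rule lux_osc_mult_ge[OF assms(1) t0(2) t0(1) K0 r])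
  also have "\<dots> \<le> TC C sqrt_pos ind_unit"
    unfolding TC_def by (rule SUP_upper2[of "(0, r)"]) (use r in auto)
  finally show "ereal M \<le> TC C sqrt_pos ind_unit" .
qed

lemma double_comm_sqrt_pos_ind_unit_unbounded:
  "\<not> (\<exists>K::real. \<forall>f. f \<in> borel_measurable lborel \<and> bounded (range f) \<and>
         (\<exists>R. \<forall>x. R < \<bar>x\<bar> \<longrightarrow> f x = 0) \<longrightarrow>
       (\<integral>\<^sup>+ x. ennreal ((comm ind_unit (comm sqrt_pos hilbert) f x)\<^sup>2) \<partial>lborel)
         \<le> ennreal K * (\<integral>\<^sup>+ x. ennreal ((f x)\<^sup>2) \<partial>lborel))"
proof
  assume "\<exists>K::real. \<forall>f. f \<in> borel_measurable lborel \<and> bounded (range f) \<and>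
         (\<exists>R. \<forall>x. R < \<bar>x\<bar> \<longrightarrow> f x = 0) \<longrightarrow>
       (\<integral>\<^sup>+ x. ennreal ((comm ind_unit (comm sqrt_pos hilbert) f x)\<^sup>2) \<partial>lborel)
         \<le> ennreal K * (\<integral>\<^sup>+ x. ennreal ((f x)\<^sup>2) \<partial>lborel)"
  then obtain K :: real where bounded_op: "\<forall>f. f \<in> borel_measurable lborel \<and> bounded (range f) \<and>
         (\<exists>R. \<forall>x. R < \<bar>x\<bar> \<longrightarrow> f x = 0) \<longrightarrow>
       (\<integral>\<^sup>+ x. ennreal ((comm ind_unit (comm sqrt_pos hilbert) f x)\<^sup>2) \<partial>lborel)
         \<le> ennreal K * (\<integral>\<^sup>+ x. ennreal ((f x)\<^sup>2) \<partial>lborel)"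
    by blast
  have "bounded (range ind_unit)"
    unfolding bounded_iff by (rule exI[of _ 1]) (auto simp: ind_unit_def)
  moreover have "\<exists>R. \<forall>x. R < \<bar>x\<bar> \<longrightarrow> ind_unit x = 0"
    by (rule exI[of _ 1]) (auto simp: ind_unit_def split: split_indicator)
  moreover have "ind_unit \<in> borel_measurable lborel" by simp
  ultimately have K:
    "(\<integral>\<^sup>+ x. ennreal ((comm ind_unit (comm sqrt_pos hilbert) ind_unit x)\<^sup>2) \<partial>lborel)
       \<le> ennreal K * (\<integral>\<^sup>+ x. ennreal ((ind_unit x)\<^sup>2) \<partial>lborel)"
    using bounded_op by blast
  have "(\<lambda>x. ennreal ((ind_unit x)\<^sup>2)) = indicator {0..1}"
    by (auto simp: ind_unit_def split: split_indicator)
  then show False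
    using K by (simp add: nn_integral_double_comm_ind_unit_sq_infinite top_unique)
qed

theorem theorem4p5:
  shows "\<exists>b1 b2. Linf_loc b1 \<and> Linf_loc b2 \<and> S2 b1 b2 + T2 b1 b2 < \<infinity> \<and>
    (\<forall>A B. young A \<and> young B \<and> B2 (conj_young A) \<and> B2 (conj_young B) \<longrightarrow> SAB A B b1 b2 = \<infinity>) \<and>
    (\<forall>C. young C \<and> B2 (conj_young C) \<longrightarrow> TC C b1 b2 = \<infinity>) \<and>
    \<not> (\<exists>K::real. \<forall>f. f \<in> borel_measurable lborel \<and> bounded (range f) \<and>
           (\<exists>R. \<forall>x. R < \<bar>x\<bar> \<longrightarrow> f x = 0) \<longrightarrow>
         (\<integral>\<^sup>+ x. ennreal ((comm b2 (comm b1 hilbert) f x)\<^sup>2) \<partial>lborel)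
           \<le> ennreal K * (\<integral>\<^sup>+ x. ennreal ((f x)\<^sup>2) \<partial>lborel))"
proof -
  have "S2 sqrt_pos ind_unit + T2 sqrt_pos ind_unit \<le> 1 + 1"
    using S2_sqrt_pos_ind_unit_le T2_sqrt_pos_ind_unit_le by (rule add_mono)
  then have "S2 sqrt_pos ind_unit + T2 sqrt_pos ind_unit < \<infinity>"
    by (auto simp: le_less_trans)
  then show ?thesis
    using Linf_loc_sqrt_pos Linf_loc_ind_unit SAB_sqrt_pos_ind_unit TC_sqrt_pos_ind_unit
      double_comm_sqrt_pos_ind_unit_unbounded
    by blast
qed

end
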